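(* Let $G$ be a meromorphic function on $\mathbb{C}$, holomorphic on $\{\operatorname{Im}\omega\ge 0\}$, whose poles $\{\omega_n^+\}$ (all with $\operatorname{Im}\omega_n^+<0$) and zeros $\{\omega_n^-\}$ are all simple, with $G(0)\notin\{0,\infty\}$. Assume: (a) there exist a strictly increasing sequence $R_N\to\infty$, with no poles or zeros of $G$ on the circles $|\omega|=R_N$, and $C>0$ with $\max_{|\omega|=R_N}|G'(\omega)/G(\omega)|\le C/R_N$ for all $N$; (b) (thermal product formula) $\sum_n|\omega_n^+|^{-2}<\infty$ and there exist $\beta>0$ and $\mu\in\mathbb{C}\setminus\{0\}$ such that $$\rho(\omega)=\frac{\mu\sinh\frac{\beta\omega}{2}}{\prod_n\left[1-\left(\frac{\omega}{\omega_n^+}\right)^2\right]}$$ for all $\omega$ that are not poles of $\rho$. Then the limit $S(\omega)=\lim_{N\to\infty}\pi_N^+(\omega)\,\pi_N^-(-\omega)$ exists for every $\omega\in\mathbb{C}$, and $$S(\omega)-S(-\omega)=2i\lambda\sinh\frac{\beta\omega}{2}\quad\text{for all }\omega\in\mathbb{C},\qquad \lambda=-\frac{\mu}{G(0)}=\frac{2iG'(0)}{\beta G(0)}.$$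
   Context: $\rho(\omega)=\frac{G(\omega)-G(-\omega)}{2i}$. For the sequence $R_N$ in (a), $\pi_N^{\pm}(\omega)=\prod_{|\omega_n^{\pm}|<R_N}\left(1-\frac{\omega}{\omega_n^{\pm}}\right)$ (finite products over poles, resp. zeros, of $G$ of modulus less than $R_N$). *)

theory Defs
  imports "HOL-Complex_Analysis.Complex_Analysis"
begin

definition poles_of :: "(complex \<Rightarrow> complex) \<Rightarrow> complex set" where
  "poles_of G = {z. is_pole G z}"

text \<open>Zeros of a nicely meromorphic function G (values at poles are 0 by
  convention, so poles are excluded explicitly).\<close>
definition zeros_of :: "(complex \<Rightarrow> complex) \<Rightarrow> complex set" where
  "zeros_of G = {z. G z = 0 \<and> \<not> is_pole G z}"

definition rho_of :: "(complex \<Rightarrow> complex) \<Rightarrow> complex \<Rightarrow> complex" where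
  "rho_of G w = (G w - G (- w)) / (2 * \<i>)"

text \<open>Finite product over the points of A of modulus less than r:
  prod_{a in A, |a| < r} (1 - w/a).  With A = poles (resp. zeros) and r = R_N
  this is pi_N^+ (resp. pi_N^-).\<close>
definition trunc_prod :: "complex set \<Rightarrow> real \<Rightarrow> complex \<Rightarrow> complex" where
  "trunc_prod A r w = (\<Prod>a\<in>{a\<in>A. norm a < r}. (1 - w / a))"

definition sq_infprod :: "complex set \<Rightarrow> complex \<Rightarrow> complex" where
  "sq_infprod A w = Lim at_top (\<lambda>r::real. \<Prod>a\<in>{a\<in>A. norm a < r}. (1 - (w / a)^2))"

end

theory Submission
  imports Defs
begin

text \<open>
  Let Q = sq_infprod (poles_of G) and, for a radius s, let
  D_s = G * prod_{|a|<s} (1 - w/a)^(-ord_a G) be G with its zeros and poles in the disc of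
  radius s divided out, so that D_s pi_s^- = G pi_s^+.  D_s is holomorphic and zero-free on the
  disc, and on the circle |w| = R_N its logarithmic derivative is G'/G plus simple fractions with
  poles inside the disc.  The Cauchy formula therefore carries the bound C/R_N into the interior,
  and integrating the logarithmic derivative shows D_(R_N) -> G(0) locally uniformly.  Hence
  pi_N^+(w) pi_N^-(-w) = G(-w) pi_N^+(w) pi_N^+(-w) / D_(R_N)(-w) tends to S(w) = G(-w) Q(w) / G(0),
  and S(w) - S(-w) = -2i rho(w) Q(w) / G(0), which is -2i mu sinh(beta w/2) / G(0) by the thermal
  product formula; this holds first away from the zeros and poles of G(w) and G(-w) and then
  everywhere by continuity.  Finally, dividing rho(w) Q(w) = mu sinh(beta w/2) by w and letting
  w -> 0 gives G'(0)/i = mu beta/2.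
\<close>

lemma norm_prod_one_plus_minus_one_le:
  fixes z :: "'b \<Rightarrow> 'a::real_normed_field"
  shows "norm ((\<Prod>a\<in>A. 1 + z a) - 1) \<le> (\<Prod>a\<in>A. 1 + norm (z a)) - 1"
proof (induction A rule: infinite_finite_induct)
  case (insert x A)
  let ?P = "\<Prod>a\<in>A. 1 + z a" and ?Q = "\<Prod>a\<in>A. 1 + norm (z a)"
  have "(\<Prod>a\<in>insert x A. 1 + z a) - 1 = (1 + z x) * (?P - 1) + z x"
    using insert by (simp add: algebra_simps)
  also have "norm \<dots> \<le> (1 + norm (z x)) * (?Q - 1) + norm (z x)"
  proof -
    have "norm ((1 + z x) * (?P - 1)) \<le> (1 + norm (z x)) * (?Q - 1)"
      unfolding norm_mult
      by (intro mult_mono insert.IH) (auto intro: order_trans[OF norm_triangle_ineq] order_trans[OF _ insert.IH])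
    then show ?thesis by (meson add_mono norm_triangle_ineq order_trans order_refl)
  qed
  also have "\<dots> = (\<Prod>a\<in>insert x A. 1 + norm (z a)) - 1"
    using insert by (simp add: algebra_simps)
  finally show ?case .
qed auto

lemma norm_prod_one_plus_minus_one_le_exp:
  fixes z :: "'b \<Rightarrow> 'a::real_normed_field"
  shows "norm ((\<Prod>a\<in>A. 1 + z a) - 1) \<le> exp (\<Sum>a\<in>A. norm (z a)) - 1"
  using norm_prod_one_plus_minus_one_le[of z A] prod_le_exp_sum[of A "\<lambda>a. norm (z a)"] by simp

lemma norm_prod_one_plus_le_exp:
  fixes z :: "'b \<Rightarrow> 'a::real_normed_field"
  shows "norm (\<Prod>a\<in>A. 1 + z a) \<le> exp (\<Sum>a\<in>A. norm (z a))"
proof -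
  have "norm (\<Prod>a\<in>A. 1 + z a) = (\<Prod>a\<in>A. norm (1 + z a))" by (simp add: prod_norm)
  also have "\<dots> \<le> (\<Prod>a\<in>A. 1 + norm (z a))"
    by (intro prod_mono) (auto intro: norm_triangle_le)
  also have "\<dots> \<le> exp (\<Sum>a\<in>A. norm (z a))" by (rule prod_le_exp_sum) auto
  finally show ?thesis .
qed

lemma norm_prod_one_plus_subset_diff_le:
  fixes z :: "'b \<Rightarrow> 'a::real_normed_field"
  assumes "finite B" "A \<subseteq> B"
  shows "norm ((\<Prod>a\<in>B. 1 + z a) - (\<Prod>a\<in>A. 1 + z a))
     \<le> exp (\<Sum>a\<in>A. norm (z a)) * (exp (\<Sum>a\<in>B - A. norm (z a)) - 1)"
proof -
  have "(\<Prod>a\<in>B. 1 + z a) - (\<Prod>a\<in>A. 1 + z a) = (\<Prod>a\<in>A. 1 + z a) * ((\<Prod>a\<in>B - A. 1 + z a) - 1)"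
    using prod.subset_diff[OF assms(2,1), of "\<lambda>a. 1 + z a"] by (simp add: algebra_simps)
  hence "norm ((\<Prod>a\<in>B. 1 + z a) - (\<Prod>a\<in>A. 1 + z a))
      = norm (\<Prod>a\<in>A. 1 + z a) * norm ((\<Prod>a\<in>B - A. 1 + z a) - 1)"
    by (simp add: norm_mult)
  also have "\<dots> \<le> exp (\<Sum>a\<in>A. norm (z a)) * (exp (\<Sum>a\<in>B - A. norm (z a)) - 1)"
    by (intro mult_mono norm_prod_one_plus_le_exp norm_prod_one_plus_minus_one_le_exp) auto
  finally show ?thesis .
qed

lemma norm_exp_minus_one_le:
  fixes d :: complex
  shows "norm (exp d - 1) \<le> norm d * exp (norm d)"
proof -
  have "norm (exp d - exp 0) \<le> exp (norm d) * norm (d - 0)"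
  proof (rule field_differentiable_bound[of "cball 0 (norm d)" exp exp])
    fix z :: complex assume "z \<in> cball 0 (norm d)"
    hence "Re z \<le> norm d" using complex_Re_le_cmod[of z] by simp
    thus "norm (exp z) \<le> exp (norm d)" by simp
  qed (auto intro: has_field_derivative_at_within DERIV_exp)
  thus ?thesis by (simp add: mult.commute)
qed

lemma circlepath_integral_inverse_product_eq_0:
  assumes "norm a < R" "norm w < R"
  shows "((\<lambda>u. 1 / ((u - a) * (u - w))) has_contour_integral 0) (circlepath 0 R)"
proof (cases "a = w")
  case True
  have "((\<lambda>u. 1 / (u - w) ^ Suc 1) has_contour_integral
          ((2 * pi * \<i>) / fact 1 * (deriv ^^ 1) (\<lambda>_. 1) w)) (circlepath 0 R)"
    by (rule Cauchy_has_contour_integral_higher_derivative_circlepath) (use assms in auto)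
  then show ?thesis using True by (simp add: power2_eq_square)
next
  case False
  have "((\<lambda>u. 1 / (u - c)) has_contour_integral (2 * of_real pi * \<i>)) (circlepath 0 R)"
    if "norm c < R" for c
    using Cauchy_integral_circlepath[of 0 R "\<lambda>_. 1" c] that by simp
  from has_contour_integral_diff[OF this this, of a w] assms
  have "((\<lambda>u. 1 / (u - a) - 1 / (u - w)) has_contour_integral 0) (circlepath 0 R)"
    by simp
  then have "((\<lambda>u. (1 / (a - w)) * (1 / (u - a) - 1 / (u - w))) has_contour_integral 0) (circlepath 0 R)"
    using has_contour_integral_lmul[of _ 0 _ "1 / (a - w)"] by simp
  then show ?thesis
  proof (rule has_contour_integral_eq)
    fix u assume "u \<in> path_image (circlepath 0 R)"
    moreover have "R \<ge> 0" using assms(1) norm_ge_zero[of a] by linarith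
    ultimately have "norm u = R" by (simp add: path_image_circlepath_nonneg)
    hence "u \<noteq> a" "u \<noteq> w" using assms by auto
    thus "(1 / (a - w)) * (1 / (u - a) - 1 / (u - w)) = 1 / ((u - a) * (u - w))"
      using False by (simp add: divide_simps)
  qed
qed

lemma circle_bound_modulo_simple_fractions:
  assumes "open U" "cball 0 R \<subseteq> U" "R > 0" "h holomorphic_on U"
    and A: "finite A" "A \<subseteq> ball 0 R"
    and h_eq: "\<And>u. norm u = R \<Longrightarrow> h u = k u + (\<Sum>a\<in>A. c a / (u - a))"
    and k_le: "\<And>u. norm u = R \<Longrightarrow> norm (k u) \<le> C / R" and "C \<ge> 0" and w: "norm w < R"
  shows "norm (h w) \<le> C / (R - norm w)"
proof -
  have I1: "((\<lambda>u. h u / (u - w)) has_contour_integral (2 * of_real pi * \<i> * h w)) (circlepath 0 R)"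
  proof (rule Cauchy_integral_circlepath)
    have "h holomorphic_on cball 0 R"
      using assms(2,4) holomorphic_on_subset by blast
    thus "continuous_on (cball 0 R) h" "h holomorphic_on ball 0 R"
      by (auto intro: holomorphic_on_imp_continuous_on)
  qed (use w in auto)
  have I2: "((\<lambda>u. \<Sum>a\<in>A. c a * (1 / ((u - a) * (u - w)))) has_contour_integral (\<Sum>a\<in>A. c a * 0))
      (circlepath 0 R)"
    by (intro has_contour_integral_sum has_contour_integral_lmul circlepath_integral_inverse_product_eq_0 A(1))
       (use A w in auto)
  have I: "((\<lambda>u. h u / (u - w) - (\<Sum>a\<in>A. c a * (1 / ((u - a) * (u - w)))))
      has_contour_integral (2 * of_real pi * \<i> * h w)) (circlepath 0 R)"
    using has_contour_integral_diff[OF I1 I2] by simp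
  have "norm (2 * of_real pi * \<i> * h w) \<le> C / R / (R - norm w) * (2 * pi * R)"
  proof (rule has_contour_integral_bound_circlepath[OF I _ \<open>R > 0\<close>])
    fix u :: complex assume "norm (u - 0) = R"
    hence u: "norm u = R" by simp
    have "h u / (u - w) - (\<Sum>a\<in>A. c a * (1 / ((u - a) * (u - w)))) = k u / (u - w)"
      using h_eq[OF u] by (simp add: sum_divide_distrib add_divide_distrib)
    also have "norm \<dots> \<le> C / R / (R - norm w)"
      unfolding norm_divide
      using norm_triangle_ineq2[of u w] assms u by (intro frac_le k_le) auto
    finally show "norm (h u / (u - w) - (\<Sum>a\<in>A. c a * (1 / ((u - a) * (u - w))))) \<le> C / R / (R - norm w)" .
  qed (use assms in simp)
  also have "\<dots> = 2 * pi * (C / (R - norm w))"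
    using \<open>R > 0\<close> w by (simp add: field_simps)
  finally have "2 * pi * norm (h w) \<le> 2 * pi * (C / (R - norm w))"
    by (simp add: norm_mult)
  thus ?thesis by (rule mult_left_le_imp_le) simp
qed

lemma holomorphic_nonzero_exp_primitive:
  fixes F :: "complex \<Rightarrow> complex"
  assumes S: "convex S" "open S" and F: "F holomorphic_on S" "\<And>z. z \<in> S \<Longrightarrow> F z \<noteq> 0"
  obtains g where "\<And>z. z \<in> S \<Longrightarrow> (g has_field_derivative deriv F z / F z) (at z)"
    "\<And>z w. z \<in> S \<Longrightarrow> w \<in> S \<Longrightarrow> F w = F z * exp (g w - g z)"
proof -
  have "(\<lambda>z. deriv F z / F z) holomorphic_on S"
    using holomorphic_deriv[OF F(1) S(2)] F by (intro holomorphic_on_divide) auto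
  then obtain g where g_within: "\<And>z. z \<in> S \<Longrightarrow> (g has_field_derivative (deriv F z / F z)) (at z within S)"
    using holomorphic_convex_primitive'[OF S] by blast
  have g: "(g has_field_derivative (deriv F z / F z)) (at z)" if "z \<in> S" for z
    using g_within[OF that] by (simp only: at_within_open[OF that S(2)])
  have "\<exists>c. \<forall>z\<in>S. F z * exp (- g z) = c"
  proof (rule has_field_derivative_zero_constant[OF S(1)])
    fix z assume z: "z \<in> S"
    have dF: "(F has_field_derivative deriv F z) (at z)"
      by (rule holomorphic_derivI[OF F(1) S(2) z])
    have "((\<lambda>z. exp (- g z)) has_field_derivative exp (- g z) * (- (deriv F z / F z))) (at z)"
      by (rule DERIV_chain2[OF DERIV_exp DERIV_minus[OF g[OF z]]])
    from DERIV_mult[OF dF this]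
    have "((\<lambda>z. F z * exp (- g z)) has_field_derivative
             deriv F z * exp (- g z) + exp (- g z) * (- (deriv F z / F z)) * F z) (at z)" .
    also have "deriv F z * exp (- g z) + exp (- g z) * (- (deriv F z / F z)) * F z = 0"
      using F(2)[OF z] by (simp add: field_simps)
    finally show "((\<lambda>z. F z * exp (- g z)) has_field_derivative 0) (at z within S)"
      by (rule has_field_derivative_at_within)
  qed
  then obtain c where c: "\<And>z. z \<in> S \<Longrightarrow> F z * exp (- g z) = c" by blast
  have "F w = F z * exp (g w - g z)" if "z \<in> S" "w \<in> S" for z w
  proof -
    have "F w = F w * exp (- g w) * exp (g w)" by (simp add: exp_minus)
    also have "\<dots> = F z * exp (- g z) * exp (g w)" using c that by simp
    also have "\<dots> = F z * exp (g w - g z)" by (simp add: exp_diff exp_minus divide_inverse mult_ac)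
    finally show ?thesis .
  qed
  with g show ?thesis by (rule that)
qed

lemma norm_diff_le_of_logderiv_bound:
  fixes F :: "complex \<Rightarrow> complex"
  assumes F: "F holomorphic_on ball 0 R" "\<And>z. z \<in> ball 0 R \<Longrightarrow> F z \<noteq> 0"
    and r: "0 \<le> r" "r < R" and bound: "\<And>z. z \<in> cball 0 r \<Longrightarrow> norm (deriv F z / F z) \<le> B"
    and v: "norm v \<le> r"
  shows "norm (F v - F 0) \<le> norm (F 0) * (B * r * exp (B * r))"
proof -
  obtain g where g: "\<And>z. z \<in> ball 0 R \<Longrightarrow> (g has_field_derivative deriv F z / F z) (at z)"
    and F_eq: "\<And>z w. z \<in> ball 0 R \<Longrightarrow> w \<in> ball 0 R \<Longrightarrow> F w = F z * exp (g w - g z)"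
    using holomorphic_nonzero_exp_primitive[OF convex_ball open_ball F] by blast
  have "norm (deriv F 0 / F 0) \<le> B" using r by (intro bound) simp
  hence "B \<ge> 0" by (meson norm_ge_zero order_trans)
  have "norm (g v - g 0) \<le> B * norm (v - 0)"
  proof (rule field_differentiable_bound[of "cball (0::complex) r" g "\<lambda>z::complex. deriv F z / F z"])
    fix z :: complex assume "z \<in> cball 0 r"
    hence "z \<in> ball 0 R" using r by simp
    thus "(g has_field_derivative deriv F z / F z) (at z within cball 0 r)"
      by (rule has_field_derivative_at_within[OF g])
  qed (use r v bound in auto)
  also have "\<dots> \<le> B * r" using v \<open>B \<ge> 0\<close> by (simp add: mult_left_mono)
  finally have d: "norm (g v - g 0) \<le> B * r" .
  have "F v - F 0 = F 0 * (exp (g v - g 0) - 1)"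
    using F_eq[of 0 v] r v by (simp add: algebra_simps)
  hence "norm (F v - F 0) = norm (F 0) * norm (exp (g v - g 0) - 1)"
    by (simp add: norm_mult)
  also have "\<dots> \<le> norm (F 0) * (B * r * exp (B * r))"
  proof (rule mult_left_mono)
    have "norm (exp (g v - g 0) - 1) \<le> norm (g v - g 0) * exp (norm (g v - g 0))"
      by (rule norm_exp_minus_one_le)
    also have "\<dots> \<le> B * r * exp (B * r)"
      using d \<open>B \<ge> 0\<close> r by (intro mult_mono) auto
    finally show "norm (exp (g v - g 0) - 1) \<le> B * r * exp (B * r)" .
  qed simp
  finally show ?thesis .
qed

lemma has_field_derivative_one_minus_divide_powi:
  fixes a u :: complex
  assumes "a \<noteq> 0" "u \<noteq> a"
  shows "((\<lambda>w. (1 - w / a) powi k) has_field_derivative (1 - u / a) powi k * (of_int k / (u - a))) (at u)"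
proof -
  have nz: "1 - u / a \<noteq> 0" using assms by (auto simp: field_simps)
  have "((\<lambda>w. (1 - w / a) powi k) has_field_derivative of_int k * (1 - u / a) powi (k - 1) * (- 1 / a)) (at u)"
    by (rule DERIV_power_int) (use nz assms in \<open>auto intro!: derivative_eq_intros\<close>)
  also have "(1 - u / a) powi (k - 1) = (1 - u / a) powi k / (1 - u / a)"
    using nz by (simp add: power_int_diff)
  also have "of_int k * ((1 - u / a) powi k / (1 - u / a)) * (- 1 / a) = (1 - u / a) powi k * (of_int k / (u - a))"
  proof -
    have "(1 - u / a) * a = - (u - a)" using assms by (simp add: field_simps)
    thus ?thesis using nz assms by (simp add: field_simps)
  qed
  finally show ?thesis .
qed

lemma power_int_linear_factor_cancel:
  fixes w z :: complex
  assumes "z \<noteq> 0" "w \<noteq> z"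
  shows "(w - z) powi n * (1 - w / z) powi (- n) = (- z) powi n"
proof -
  have "1 - w / z \<noteq> 0" using assms by (auto simp: field_simps)
  hence inv: "(1 - w / z) powi n * (1 - w / z) powi (- n) = 1"
    using power_int_add[of "1 - w / z" n "- n"] by simp
  have "w - z = (- z) * (1 - w / z)" using assms by (simp add: field_simps)
  hence "(w - z) powi n = (- z) powi n * (1 - w / z) powi n" by (metis power_int_mult_distrib)
  hence "(w - z) powi n * (1 - w / z) powi (- n) = (- z) powi n * ((1 - w / z) powi n * (1 - w / z) powi (- n))"
    by (simp only: mult.assoc)
  thus ?thesis by (simp only: inv mult_1_right)
qed

lemma remove_sings_eq_on_open:
  assumes "open S" "z \<in> S" "H holomorphic_on S" "\<And>w. w \<in> S - {z} \<Longrightarrow> f w = H w" "w \<in> S"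
  shows "remove_sings f w = H w"
proof (rule remove_sings_eqI)
  have "eventually (\<lambda>x. x \<in> S - {z}) (at w)"
  proof (cases "w = z")
    case True thus ?thesis using eventually_at_in_open[OF assms(1,5)] by simp
  next
    case False
    hence "open (S - {z})" "w \<in> S - {z}" using assms by auto
    thus ?thesis using eventually_at_in_open' by blast
  qed
  hence "eventually (\<lambda>x. H x = f x) (at w)"
    by eventually_elim (use assms(4) in auto)
  moreover have "H \<midarrow>w\<rightarrow> H w"
    using assms by (meson holomorphic_on_imp_continuous_on continuous_on_eq_continuous_at isContD)
  ultimately show "f \<midarrow>w\<rightarrow> H w" by (rule Lim_transform_eventually[rotated])
qed

lemma continuous_on_eq_off_finite:
  fixes f g :: "'a::{perfect_space,t2_space} \<Rightarrow> 'b::t2_space"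
  assumes S: "open S" and f: "continuous_on S f" and g: "continuous_on S g" and F: "finite F"
    and eq: "\<And>y. y \<in> S - F \<Longrightarrow> f y = g y" and x: "x \<in> S"
  shows "f x = g x"
proof -
  have "open (S - (F - {x}))" using S F by (intro open_Diff finite_imp_closed) auto
  hence "eventually (\<lambda>y. y \<in> (S - (F - {x})) - {x}) (at x)"
    by (rule eventually_at_in_open) (use x in auto)
  hence "eventually (\<lambda>y. f y = g y) (at x)"
    by eventually_elim (use eq in auto)
  moreover have "isCont f x" "isCont g x"
    using f g S x continuous_on_eq_continuous_at by blast+
  hence "f \<midarrow>x\<rightarrow> f x" "g \<midarrow>x\<rightarrow> g x" by (auto intro: isContD)
  ultimately show ?thesis
    using Lim_transform_eventually LIM_unique by metis
qed

lemma dist_Lim_at_top_le_of_Cauchy_bound: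
  fixes f :: "real \<Rightarrow> 'a::banach"
  assumes bound: "\<And>s s'. s0 \<le> s \<Longrightarrow> s \<le> s' \<Longrightarrow> dist (f s') (f s) \<le> b s"
    and b: "(b \<longlongrightarrow> 0) at_top" and "s0 \<le> s"
  shows "dist (f s) (Lim at_top f) \<le> b s"
proof -
  have "Cauchy (\<lambda>n. f (real n))"
  proof (rule metric_CauchyI)
    fix e :: real assume "e > 0"
    hence "\<forall>\<^sub>F s in at_top. b s < e / 2" by (intro order_tendstoD(2)[OF b]) simp
    hence "\<forall>\<^sub>F s in at_top. s0 \<le> s \<and> b s < e / 2"
      by (rule eventually_conj[OF eventually_ge_at_top, rotated])
    then obtain s1 where s1: "\<And>s. s \<ge> s1 \<Longrightarrow> s0 \<le> s \<and> b s < e / 2"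
      by (auto simp: eventually_at_top_linorder)
    define M where "M = nat \<lceil>s1\<rceil>"
    have M: "s0 \<le> real M \<and> b (real M) < e / 2"
      by (rule s1) (simp add: M_def real_nat_ceiling_ge)
    have "dist (f (real n)) (f (real M)) < e / 2" if "n \<ge> M" for n
      using bound[of "real M" "real n"] M that by fastforce
    hence "dist (f (real m)) (f (real n)) < e" if "m \<ge> M" "n \<ge> M" for m n
      using dist_triangle_half_l that by blast
    thus "\<exists>M. \<forall>m\<ge>M. \<forall>n\<ge>M. dist (f (real m)) (f (real n)) < e" by blast
  qed
  then obtain L where L: "(\<lambda>n. f (real n)) \<longlonglongrightarrow> L"
    by (auto simp: Cauchy_convergent_iff convergent_def)
  have le: "dist (f s) L \<le> b s" if "s0 \<le> s" for s
  proof -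
    have "(\<lambda>n. dist (f (real n)) (f s)) \<longlonglongrightarrow> dist L (f s)"
      by (intro tendsto_intros L)
    moreover have "\<forall>\<^sub>F n in sequentially. dist (f (real n)) (f s) \<le> b s"
      using eventually_ge_at_top[of "nat \<lceil>s\<rceil>"]
      by eventually_elim (use that in \<open>auto intro!: bound simp: nat_le_iff ceiling_le_iff\<close>)
    ultimately show ?thesis
      by (simp add: dist_commute tendsto_upperbound)
  qed
  have "\<forall>\<^sub>F s in at_top. norm (f s - L) \<le> b s"
    using eventually_ge_at_top[of s0] by eventually_elim (use le in \<open>simp add: dist_norm\<close>)
  hence "((\<lambda>s. f s - L) \<longlongrightarrow> 0) at_top"
    by (rule Lim_null_comparison[OF _ b])
  hence "Lim at_top f = L"
    by (intro tendsto_Lim) (simp_all add: LIM_zero_cancel)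
  thus ?thesis using le[OF \<open>s0 \<le> s\<close>] by simp
qed

lemma uniform_limit_Lim_at_top_of_Cauchy_bound:
  fixes f :: "real \<Rightarrow> 'a \<Rightarrow> 'b::banach"
  assumes bound: "\<And>s s' x. s0 \<le> s \<Longrightarrow> s \<le> s' \<Longrightarrow> x \<in> X \<Longrightarrow> dist (f s' x) (f s x) \<le> b s"
    and b: "(b \<longlongrightarrow> 0) at_top"
  shows "uniform_limit X f (\<lambda>x. Lim at_top (\<lambda>s. f s x)) at_top"
proof (rule uniform_limitI)
  fix e :: real assume "e > 0"
  have le: "dist (f s x) (Lim at_top (\<lambda>s. f s x)) \<le> b s" if "x \<in> X" "s0 \<le> s" for x s
    using that by (intro dist_Lim_at_top_le_of_Cauchy_bound[OF _ b]) (auto intro: bound)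
  show "\<forall>\<^sub>F s in at_top. \<forall>x\<in>X. dist (f s x) (Lim at_top (\<lambda>s. f s x)) < e"
    using order_tendstoD(2)[OF b \<open>e > 0\<close>] eventually_ge_at_top[of s0]
    by eventually_elim (use le in force)
qed

definition partial_sq_prod :: "complex set \<Rightarrow> real \<Rightarrow> complex \<Rightarrow> complex" where
  "partial_sq_prod P s v = (\<Prod>p\<in>{p\<in>P. norm p < s}. 1 - (v / p)^2)"

lemma trunc_prod_mult_minus: "trunc_prod A s v * trunc_prod A s (- v) = partial_sq_prod A s v"
proof -
  have "(1 - v / p) * (1 - (- v) / p) = 1 - (v / p)^2" for p
    by (simp add: power2_eq_square algebra_simps)
  thus ?thesis by (simp add: trunc_prod_def partial_sq_prod_def prod.distrib[symmetric])
qed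

lemma trunc_prod_split:
  assumes "a \<le> s" "finite {p\<in>A. norm p < s}"
  shows "trunc_prod A s v = trunc_prod A a v * trunc_prod {p\<in>A. a \<le> norm p} s v"
proof -
  have "{p\<in>A. norm p < s} = {p\<in>A. norm p < a} \<union> {p\<in>{p\<in>A. a \<le> norm p}. norm p < s}"
    using assms(1) by auto
  thus ?thesis
    unfolding trunc_prod_def using assms(2)
    by (metis (no_types, lifting) prod.union_disjoint finite_Un disjoint_iff mem_Collect_eq not_le)
qed

lemma partial_sq_prod_split:
  assumes "a \<le> s" "finite {p\<in>A. norm p < s}"
  shows "partial_sq_prod A s v = partial_sq_prod A a v * partial_sq_prod {p\<in>A. a \<le> norm p} s v"
  using trunc_prod_split[OF assms, of v] trunc_prod_split[OF assms, of "- v"]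
  by (simp add: trunc_prod_mult_minus[symmetric] mult_ac)

lemma continuous_on_trunc_prod: "continuous_on S (trunc_prod A s)"
  unfolding trunc_prod_def divide_inverse by (intro continuous_intros)

lemma continuous_on_partial_sq_prod: "continuous_on S (partial_sq_prod P s)"
  unfolding partial_sq_prod_def divide_inverse by (intro continuous_intros)

lemma sq_infprod_minus: "sq_infprod P (- v) = sq_infprod P v"
  by (simp add: sq_infprod_def)

locale square_summable_points =
  fixes P :: "complex set"
  assumes finite_disc: "\<And>s. finite {p\<in>P. norm p < s}"
    and summable: "(\<lambda>p. 1 / (norm p)^2) summable_on P"
begin

abbreviation (input) inv_sq :: "complex \<Rightarrow> real" where
  "inv_sq p \<equiv> 1 / (norm p)^2"

lemma summable_on_subset: "Q \<subseteq> P \<Longrightarrow> inv_sq summable_on Q"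
  by (rule summable_on_subset_banach[OF summable])

lemma sum_norm_sq_le_infsum:
  assumes "finite E" "E \<subseteq> Q" "Q \<subseteq> P" "norm v \<le> r"
  shows "(\<Sum>p\<in>E. norm (- ((v / p)^2))) \<le> r^2 * infsum inv_sq Q"
proof -
  have "norm (- ((v / p)^2)) = (norm v)^2 * inv_sq p" for p
    by (simp add: norm_divide norm_power power_divide)
  hence "(\<Sum>p\<in>E. norm (- ((v / p)^2))) \<le> (\<Sum>p\<in>E. r^2 * inv_sq p)"
    using assms(4) by (intro sum_mono) (auto intro!: divide_right_mono power_mono)
  also have "\<dots> \<le> r^2 * infsum inv_sq Q"
    unfolding sum_distrib_left[symmetric]
    using assms by (intro mult_left_mono finite_sum_le_infsum summable_on_subset) auto
  finally show ?thesis .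
qed

lemma tendsto_sum_disc_infsum:
  "((\<lambda>s. \<Sum>p\<in>{p\<in>P. norm p < s}. inv_sq p) \<longlongrightarrow> infsum inv_sq P) at_top"
proof -
  have "filterlim (\<lambda>s. {p\<in>P. norm p < s}) (finite_subsets_at_top P) at_top"
    unfolding filterlim_finite_subsets_at_top
  proof (intro allI impI)
    fix X assume X: "finite X \<and> X \<subseteq> P"
    have X_in: "X \<subseteq> {p\<in>P. norm p < s}" if "s > (\<Sum>p\<in>X. norm p)" for s
      using X that member_le_sum[of _ X norm] by fastforce
    show "\<forall>\<^sub>F s in at_top. finite {p\<in>P. norm p < s} \<and> X \<subseteq> {p\<in>P. norm p < s} \<and> {p\<in>P. norm p < s} \<subseteq> P"
      using eventually_gt_at_top[of "\<Sum>p\<in>X. norm p"] by eventually_elim (use X_in in \<open>auto simp: finite_disc\<close>)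
  qed
  with has_sum_infsum[OF summable] show ?thesis
    unfolding has_sum_def by (rule filterlim_compose)
qed

lemma infsum_tail_tendsto_0: "((\<lambda>s. infsum inv_sq {p\<in>P. s \<le> norm p}) \<longlongrightarrow> 0) at_top"
proof -
  have "infsum inv_sq P = (\<Sum>p\<in>{p\<in>P. norm p < s}. inv_sq p) + infsum inv_sq {p\<in>P. s \<le> norm p}" for s
  proof -
    have "P = {p\<in>P. norm p < s} \<union> {p\<in>P. s \<le> norm p}" by auto
    also have "infsum inv_sq \<dots> = infsum inv_sq {p\<in>P. norm p < s} + infsum inv_sq {p\<in>P. s \<le> norm p}"
      by (rule infsum_Un_disjoint) (auto intro: summable_on_subset)
    finally show ?thesis by (simp add: finite_disc)
  qed
  hence "infsum inv_sq {p\<in>P. s \<le> norm p} = infsum inv_sq P - (\<Sum>p\<in>{p\<in>P. norm p < s}. inv_sq p)" for s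
    by (simp add: algebra_simps)
  thus ?thesis
    using tendsto_diff[OF tendsto_const tendsto_sum_disc_infsum, of "infsum inv_sq P"] by simp
qed

lemma norm_partial_sq_prod_diff_le:
  assumes "s \<le> s'" "norm v \<le> r"
  shows "norm (partial_sq_prod P s' v - partial_sq_prod P s v)
     \<le> exp (r^2 * infsum inv_sq P) * (exp (r^2 * infsum inv_sq {p\<in>P. s \<le> norm p}) - 1)"
proof -
  define A where "A = {p\<in>P. norm p < s}"
  define B where "B = {p\<in>P. norm p < s'}"
  have AB: "finite B" "A \<subseteq> B" "B - A \<subseteq> {p\<in>P. s \<le> norm p}"
    using assms(1) finite_disc by (auto simp: A_def B_def)
  have "norm (partial_sq_prod P s' v - partial_sq_prod P s v)
     \<le> exp (\<Sum>p\<in>A. norm (- ((v / p)^2))) * (exp (\<Sum>p\<in>B - A. norm (- ((v / p)^2))) - 1)"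
    using norm_prod_one_plus_subset_diff_le[OF AB(1,2), of "\<lambda>p. - ((v / p)^2)"]
    by (simp add: partial_sq_prod_def A_def B_def)
  also have "\<dots> \<le> exp (r^2 * infsum inv_sq P) * (exp (r^2 * infsum inv_sq {p\<in>P. s \<le> norm p}) - 1)"
  proof (intro mult_mono)
    have "(\<Sum>p\<in>A. norm (- ((v / p)^2))) \<le> r^2 * infsum inv_sq P"
      using finite_subset[OF AB(2,1)] assms(2) by (intro sum_norm_sq_le_infsum) (auto simp: A_def)
    thus "exp (\<Sum>p\<in>A. norm (- ((v / p)^2))) \<le> exp (r^2 * infsum inv_sq P)" by simp
    have "(\<Sum>p\<in>B - A. norm (- ((v / p)^2))) \<le> r^2 * infsum inv_sq {p\<in>P. s \<le> norm p}"
      using AB assms(2) by (intro sum_norm_sq_le_infsum) auto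
    thus "exp (\<Sum>p\<in>B - A. norm (- ((v / p)^2))) - 1 \<le> exp (r^2 * infsum inv_sq {p\<in>P. s \<le> norm p}) - 1"
      by simp
  qed (auto intro: sum_nonneg)
  finally show ?thesis .
qed

lemma uniform_limit_partial_sq_prod: "uniform_limit (cball 0 r) (partial_sq_prod P) (sq_infprod P) at_top"
proof -
  define b where "b s = exp (r^2 * infsum inv_sq P) * (exp (r^2 * infsum inv_sq {p\<in>P. s \<le> norm p}) - 1)" for s
  have "(b \<longlongrightarrow> exp (r^2 * infsum inv_sq P) * (exp (r^2 * 0) - 1)) at_top"
    unfolding b_def by (intro tendsto_intros infsum_tail_tendsto_0)
  hence "(b \<longlongrightarrow> 0) at_top" by simp
  hence "uniform_limit (cball 0 r) (partial_sq_prod P) (\<lambda>v. Lim at_top (\<lambda>s. partial_sq_prod P s v)) at_top"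
    by (rule uniform_limit_Lim_at_top_of_Cauchy_bound[rotated])
       (use norm_partial_sq_prod_diff_le in \<open>auto simp: dist_norm b_def\<close>)
  moreover have "sq_infprod P = (\<lambda>v. Lim at_top (\<lambda>s. partial_sq_prod P s v))"
    by (simp add: fun_eq_iff sq_infprod_def partial_sq_prod_def)
  ultimately show ?thesis by simp
qed

lemma tendsto_sq_infprod: "((\<lambda>s. partial_sq_prod P s v) \<longlongrightarrow> sq_infprod P v) at_top"
  by (rule tendsto_uniform_limitI[OF uniform_limit_partial_sq_prod, of v "norm v"]) simp

lemma isCont_sq_infprod: "isCont (sq_infprod P) v"
proof -
  have "continuous_on (cball 0 (norm v + 1)) (sq_infprod P)"
    by (rule uniform_limit_theorem[OF _ uniform_limit_partial_sq_prod])
       (auto intro: always_eventually continuous_on_partial_sq_prod)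
  thus ?thesis by (rule continuous_on_interior) simp
qed

lemma sq_infprod_0: "sq_infprod P 0 = 1"
  using tendsto_sq_infprod[of 0] by (simp add: partial_sq_prod_def LIMSEQ_const_iff tendsto_const_iff)

lemma norm_sq_infprod_minus_1_le: "norm (sq_infprod P v - 1) \<le> exp ((norm v)^2 * infsum inv_sq P) - 1"
proof (rule tendsto_upperbound)
  show "((\<lambda>s. norm (partial_sq_prod P s v - 1)) \<longlongrightarrow> norm (sq_infprod P v - 1)) at_top"
    by (intro tendsto_intros tendsto_sq_infprod)
  have "norm (partial_sq_prod P s v - 1) \<le> exp ((norm v)^2 * infsum inv_sq P) - 1" for s
  proof -
    have "norm (partial_sq_prod P s v - 1) \<le> exp (\<Sum>p\<in>{p\<in>P. norm p < s}. norm (- ((v / p)^2))) - 1"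
      using norm_prod_one_plus_minus_one_le_exp[of "\<lambda>p. - ((v / p)^2)"]
      by (simp add: partial_sq_prod_def)
    also have "\<dots> \<le> exp ((norm v)^2 * infsum inv_sq P) - 1"
      using sum_norm_sq_le_infsum[of "{p\<in>P. norm p < s}" P v "norm v"] finite_disc by simp
    finally show ?thesis .
  qed
  thus "\<forall>\<^sub>F s in at_top. norm (partial_sq_prod P s v - 1) \<le> exp ((norm v)^2 * infsum inv_sq P) - 1"
    by simp
qed simp

lemma square_summable_tail: "square_summable_points {p\<in>P. a \<le> norm p}"
  by unfold_locales (auto intro: finite_subset[OF _ finite_disc] summable_on_subset)

lemma sq_infprod_split: "sq_infprod P v = partial_sq_prod P a v * sq_infprod {p\<in>P. a \<le> norm p} v"
proof -
  interpret tail: square_summable_points "{p\<in>P. a \<le> norm p}" by (rule square_summable_tail)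
  have split: "partial_sq_prod P s v = partial_sq_prod P a v * partial_sq_prod {p\<in>P. a \<le> norm p} s v"
    if "a \<le> s" for s
    using that finite_disc by (rule partial_sq_prod_split)
  have "\<forall>\<^sub>F s in at_top. partial_sq_prod P a v * partial_sq_prod {p\<in>P. a \<le> norm p} s v = partial_sq_prod P s v"
    using eventually_ge_at_top[of a] by eventually_elim (rule split[symmetric])
  from tendsto_mult[OF tendsto_const tail.tendsto_sq_infprod] this
  have "((\<lambda>s. partial_sq_prod P s v) \<longlongrightarrow> partial_sq_prod P a v * sq_infprod {p\<in>P. a \<le> norm p} v) at_top"
    by (rule Lim_transform_eventually)
  with tendsto_sq_infprod[of v] show ?thesis
    by (rule tendsto_unique[OF trivial_limit_at_top_linorder])
qed

lemma sq_infprod_nonzero: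
  assumes "v \<notin> P" "- v \<notin> P"
  shows "sq_infprod P v \<noteq> 0"
proof -
  have "((\<lambda>a. (norm v)^2 * infsum inv_sq {p\<in>P. a \<le> norm p}) \<longlongrightarrow> (norm v)^2 * 0) at_top"
    by (intro tendsto_intros infsum_tail_tendsto_0)
  then obtain a where a: "(norm v)^2 * infsum inv_sq {p\<in>P. a \<le> norm p} < ln 2"
    using order_tendstoD(2)[of _ 0 at_top "ln 2"] eventually_happens' by fastforce
  interpret tail: square_summable_points "{p\<in>P. a \<le> norm p}" by (rule square_summable_tail)
  have "exp ((norm v)^2 * infsum inv_sq {p\<in>P. a \<le> norm p}) < 2"
    using a exp_less_cancel_iff[of _ "ln 2"] by simp
  hence "norm (sq_infprod {p\<in>P. a \<le> norm p} v - 1) < 1"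
    using tail.norm_sq_infprod_minus_1_le[of v] by simp
  hence "sq_infprod {p\<in>P. a \<le> norm p} v \<noteq> 0" by auto
  moreover have "1 - (v / p)^2 \<noteq> 0" if "p \<in> P" for p
  proof
    assume "1 - (v / p)^2 = 0"
    hence "p \<noteq> 0" "(v / p)^2 = 1" by auto
    hence "v^2 = p^2" by (simp add: power_divide)
    hence "v = p \<or> v = - p" by (simp add: power2_eq_iff)
    thus False using assms that by auto
  qed
  hence "partial_sq_prod P a v \<noteq> 0"
    by (simp add: partial_sq_prod_def finite_disc)
  ultimately show ?thesis by (simp add: sq_infprod_split[of v a])
qed

end

locale meromorphic_nonzero_at_0 =
  fixes G :: "complex \<Rightarrow> complex"
  assumes mero: "G nicely_meromorphic_on UNIV"
    and nonzero_0: "G 0 \<noteq> 0"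
begin

lemma zeros_sparse: "{z. G z = 0} sparse_in UNIV"
proof -
  have "(\<forall>x\<in>UNIV. G x = 0) \<or> eventually (\<lambda>x. G x \<noteq> 0) (cosparse UNIV)"
    by (rule nicely_meromorphic_imp_constant_or_avoid[OF mero]) auto
  with nonzero_0 show ?thesis by (auto simp: eventually_cosparse)
qed

lemma closed_zeros_diff: "closed ({z. G z = 0} - X)"
  by (rule sparse_in_UNIV_imp_closed, rule sparse_in_subset2[OF zeros_sparse]) blast

lemma finite_zeros_cball: "finite ({z. G z = 0} \<inter> cball c r)"
  using sparse_in_compact_finite[OF sparse_in_subset[OF zeros_sparse], of "cball c r"]
  by (simp add: Int_commute)

lemma zeros_eq_poles_un_zeros: "{z. G z = 0} = poles_of G \<union> zeros_of G"
  using is_pole_zero_at_nicely_mero[OF mero] by (auto simp: poles_of_def zeros_of_def)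

lemma analytic_at_nonzero: "G z \<noteq> 0 \<Longrightarrow> G analytic_on {z}"
  using nicely_meromorphic_on_imp_analytic_at[OF mero] is_pole_zero_at_nicely_mero[OF mero] by blast

lemma eventually_nonzero_at: "eventually (\<lambda>w. G w \<noteq> 0) (at z)"
proof -
  have "\<not> z islimpt {z. G z = 0}" using zeros_sparse by (simp add: sparse_in_open)
  thus ?thesis by (simp add: islimpt_conv_frequently_at frequently_def)
qed

lemma local_factorization:
  obtains r g where "r > 0" "g holomorphic_on cball z r" "\<And>w. w \<in> cball z r \<Longrightarrow> g w \<noteq> 0"
    "\<And>w. w \<in> cball z r - {z} \<Longrightarrow> G w = g w * (w - z) powi zorder G z"
proof -
  have mero_z: "G meromorphic_on {z}"
    using mero by (auto simp: nicely_meromorphic_on_def intro: meromorphic_on_subset)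
  have "zor_poly G z z \<noteq> 0 \<and> (\<exists>r>0. zor_poly G z holomorphic_on cball z r \<and>
      (\<forall>w\<in>cball z r - {z}. G w = zor_poly G z w * (w - z) powi (zorder G z) \<and> zor_poly G z w \<noteq> 0))"
    using mero_z eventually_nonzero_at[of z] by (intro zorder_exist)
       (auto simp: meromorphic_on_isolated_singularity meromorphic_on_not_essential eventually_frequently)
  then obtain r where "r > 0" "zor_poly G z holomorphic_on cball z r" "zor_poly G z z \<noteq> 0"
    "\<And>w. w \<in> cball z r - {z} \<Longrightarrow> G w = zor_poly G z w * (w - z) powi zorder G z \<and> zor_poly G z w \<noteq> 0"
    by blast
  moreover from this have "zor_poly G z w \<noteq> 0" if "w \<in> cball z r" for w
    using that by (cases "w = z") auto
  ultimately show ?thesis using that by blast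
qed

definition zero_pole_product :: "complex set \<Rightarrow> complex \<Rightarrow> complex" where
  "zero_pole_product A w = (\<Prod>a\<in>A. (1 - w / a) powi (- zorder G a))"

definition divide_out :: "complex set \<Rightarrow> complex \<Rightarrow> complex" where
  "divide_out A = remove_sings (\<lambda>w. G w * zero_pole_product A w)"

lemma factor_nonzero: "G a = 0 \<Longrightarrow> w \<noteq> a \<Longrightarrow> 1 - w / a \<noteq> 0"
  using nonzero_0 by (cases "a = 0") (auto simp: field_simps)

lemma zero_pole_product_nonzero:
  assumes "A \<subseteq> {z. G z = 0}" "w \<notin> A"
  shows "zero_pole_product A w \<noteq> 0"
  using assms factor_nonzero unfolding zero_pole_product_def
  by (cases "finite A") auto

lemma holomorphic_zero_pole_product:
  assumes "A \<subseteq> {z. G z = 0}" "S \<inter> A = {}"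
  shows "zero_pole_product A holomorphic_on S"
  unfolding zero_pole_product_def
  using assms factor_nonzero by (intro holomorphic_intros) auto

lemma zero_pole_product_cancels:
  assumes A: "finite A" "A \<subseteq> {z. G z = 0}" and "z \<in> A"
  obtains S H where "open S" "z \<in> S" "H holomorphic_on S" "\<And>w. w \<in> S \<Longrightarrow> H w \<noteq> 0"
    "\<And>w. w \<in> S - {z} \<Longrightarrow> G w * zero_pole_product A w = H w"
proof -
  define n where "n = zorder G z"
  have "z \<noteq> 0" using \<open>z \<in> A\<close> A nonzero_0 by auto
  obtain r g where rg: "r > 0" "g holomorphic_on cball z r" "\<And>w. w \<in> cball z r \<Longrightarrow> g w \<noteq> 0"
    "\<And>w. w \<in> cball z r - {z} \<Longrightarrow> G w = g w * (w - z) powi n"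
    using local_factorization[of z] unfolding n_def by blast
  obtain e where e: "e > 0" "\<And>w. w \<noteq> z \<Longrightarrow> dist w z < e \<Longrightarrow> G w \<noteq> 0"
    using eventually_nonzero_at[of z] by (auto simp: eventually_at)
  define S where "S = ball z (min r e)"
  define H where "H w = g w * (- z) powi n * zero_pole_product (A - {z}) w" for w
  have S_avoids: "S \<inter> (A - {z}) = {}"
  proof -
    have "w \<notin> A" if "w \<in> S" "w \<noteq> z" for w
      using that A e(2)[of w] by (auto simp: S_def dist_commute)
    thus ?thesis by blast
  qed
  show ?thesis
  proof (rule that[of S H])
    show "open S" "z \<in> S" using rg e by (auto simp: S_def)
    show "H holomorphic_on S"
      unfolding H_def using rg(2) A S_avoids
      by (intro holomorphic_intros holomorphic_zero_pole_product holomorphic_on_subset[OF rg(2)])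
         (auto simp: S_def)
    show "H w \<noteq> 0" if "w \<in> S" for w
    proof -
      have "zero_pole_product (A - {z}) w \<noteq> 0"
        using that S_avoids A by (intro zero_pole_product_nonzero) auto
      thus ?thesis using rg(3) that \<open>z \<noteq> 0\<close> by (auto simp: H_def S_def)
    qed
    show "G w * zero_pole_product A w = H w" if w: "w \<in> S - {z}" for w
    proof -
      have "(w - z) powi n * (1 - w / z) powi (- n) = (- z) powi n"
        using \<open>z \<noteq> 0\<close> w by (intro power_int_linear_factor_cancel) auto
      moreover have "zero_pole_product A w = (1 - w / z) powi (- n) * zero_pole_product (A - {z}) w"
        unfolding zero_pole_product_def n_def using A(1) \<open>z \<in> A\<close> by (rule prod.remove)
      moreover have "G w = g w * (w - z) powi n" using rg(4) w by (auto simp: S_def)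
      ultimately show ?thesis by (simp add: H_def mult_ac)
    qed
  qed
qed

lemma divide_out_local:
  assumes A: "finite A" "A \<subseteq> {z. G z = 0}" and z: "z \<notin> {w. G w = 0} - A"
  obtains S H where "open S" "z \<in> S" "H holomorphic_on S" "\<And>w. w \<in> S \<Longrightarrow> H w \<noteq> 0"
    "\<And>w. w \<in> S - {z} \<Longrightarrow> G w * zero_pole_product A w = H w"
    "G z \<noteq> 0 \<Longrightarrow> H z = G z * zero_pole_product A z"
proof (cases "z \<in> A")
  case True
  then obtain S H where "open S" "z \<in> S" "H holomorphic_on S" "\<And>w. w \<in> S \<Longrightarrow> H w \<noteq> 0"
    "\<And>w. w \<in> S - {z} \<Longrightarrow> G w * zero_pole_product A w = H w"
    using zero_pole_product_cancels[OF A] by blast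
  moreover have "G z = 0" using True A by auto
  ultimately show ?thesis using that by blast
next
  case False
  hence "G z \<noteq> 0" using z by auto
  obtain T where T: "open T" "z \<in> T" "G holomorphic_on T"
    using analytic_at_nonzero[OF \<open>G z \<noteq> 0\<close>] analytic_at by blast
  define S where "S = T - {w. G w = 0}"
  have S: "open S" "z \<in> S" using T closed_zeros_diff[of "{}"] \<open>G z \<noteq> 0\<close> by (auto simp: S_def)
  show ?thesis
  proof (rule that[of S "\<lambda>w. G w * zero_pole_product A w"])
    show "(\<lambda>w. G w * zero_pole_product A w) holomorphic_on S"
      using T A by (intro holomorphic_intros holomorphic_zero_pole_product) (auto simp: S_def)
    show "G w * zero_pole_product A w \<noteq> 0" if "w \<in> S" for w
      using that A zero_pole_product_nonzero by (auto simp: S_def)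
  qed (use S in auto)
qed

lemma divide_out_on_neighbourhood:
  assumes A: "finite A" "A \<subseteq> {z. G z = 0}" and z: "z \<notin> {w. G w = 0} - A"
  shows "\<exists>S H. open S \<and> z \<in> S \<and> H holomorphic_on S \<and> (\<forall>w\<in>S. H w \<noteq> 0 \<and> divide_out A w = H w) \<and>
           (G z \<noteq> 0 \<longrightarrow> H z = G z * zero_pole_product A z)"
proof -
  obtain S H where SH: "open S" "z \<in> S" "H holomorphic_on S" "\<And>w. w \<in> S \<Longrightarrow> H w \<noteq> 0"
    "\<And>w. w \<in> S - {z} \<Longrightarrow> G w * zero_pole_product A w = H w"
    "G z \<noteq> 0 \<Longrightarrow> H z = G z * zero_pole_product A z"
    using divide_out_local[OF A z] by blast
  have "divide_out A w = H w" if "w \<in> S" for w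
    unfolding divide_out_def by (rule remove_sings_eq_on_open[OF SH(1-3,5) that])
  thus ?thesis using SH(1-4,6) by blast
qed

lemma
  assumes A: "finite A" "A \<subseteq> {z. G z = 0}"
  shows holomorphic_divide_out: "divide_out A holomorphic_on - ({z. G z = 0} - A)"
    and divide_out_nonzero: "\<And>w. w \<notin> {z. G z = 0} - A \<Longrightarrow> divide_out A w \<noteq> 0"
    and divide_out_eq: "\<And>w. G w \<noteq> 0 \<Longrightarrow> divide_out A w = G w * zero_pole_product A w"
proof -
  have analytic_near: "divide_out A analytic_on {z}" if z: "z \<notin> {w. G w = 0} - A" for z
  proof -
    obtain S H where S: "open S" "z \<in> S" and H: "H holomorphic_on S" "\<forall>w\<in>S. divide_out A w = H w"
      using divide_out_on_neighbourhood[OF A z] by blast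
    have "divide_out A holomorphic_on S"
      using H(1) by (rule holomorphic_transform) (simp add: H(2))
    thus ?thesis using S by (auto simp: analytic_at)
  qed
  have "divide_out A analytic_on - ({z. G z = 0} - A)"
  proof (rule analytic_on_analytic_at[THEN iffD2], intro ballI)
    fix z assume "z \<in> - ({z. G z = 0} - A)"
    thus "divide_out A analytic_on {z}" by (intro analytic_near) simp
  qed
  thus "divide_out A holomorphic_on - ({z. G z = 0} - A)" by (rule analytic_imp_holomorphic)
  show "divide_out A w \<noteq> 0" if w: "w \<notin> {z. G z = 0} - A" for w
  proof -
    obtain S H where "w \<in> S" "\<forall>u\<in>S. H u \<noteq> 0 \<and> divide_out A u = H u"
      using divide_out_on_neighbourhood[OF A w] by blast
    thus ?thesis by simp
  qed
  show "divide_out A w = G w * zero_pole_product A w" if w: "G w \<noteq> 0" for w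
  proof -
    have "w \<notin> {z. G z = 0} - A" using w by simp
    from divide_out_on_neighbourhood[OF A this] w
    obtain S H where "w \<in> S" "\<forall>u\<in>S. divide_out A u = H u" "H w = G w * zero_pole_product A w"
      by blast
    thus ?thesis by simp
  qed
qed

lemma has_field_derivative_zero_pole_product:
  assumes A: "finite A" "A \<subseteq> {z. G z = 0}" and u: "G u \<noteq> 0"
  shows "(zero_pole_product A has_field_derivative
           - zero_pole_product A u * (\<Sum>a\<in>A. of_int (zorder G a) / (u - a))) (at u)"
proof -
  have factor: "((\<lambda>w. (1 - w / a) powi (- zorder G a)) has_field_derivative
      (1 - u / a) powi (- zorder G a) * (of_int (- zorder G a) / (u - a))) (at u)" if "a \<in> A" for a
  proof -
    have "G a = 0" using that A by auto
    hence "a \<noteq> 0" "u \<noteq> a" using u nonzero_0 by auto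
    thus ?thesis by (rule has_field_derivative_one_minus_divide_powi)
  qed
  have nonzero: "(1 - u / a) powi (- zorder G a) \<noteq> 0" if "a \<in> A" for a
    using that A u factor_nonzero by auto
  have "(zero_pole_product A has_field_derivative zero_pole_product A u *
      (\<Sum>a\<in>A. (1 - u / a) powi (- zorder G a) * (of_int (- zorder G a) / (u - a)) /
                 (1 - u / a) powi (- zorder G a))) (at u)"
    unfolding zero_pole_product_def by (rule has_field_derivative_prod'[OF nonzero factor])
  also have "(\<Sum>a\<in>A. (1 - u / a) powi (- zorder G a) * (of_int (- zorder G a) / (u - a)) /
                 (1 - u / a) powi (- zorder G a)) = - (\<Sum>a\<in>A. of_int (zorder G a) / (u - a))"
    using nonzero by (simp add: sum_negf[symmetric])
  finally show ?thesis by simp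
qed

lemma logderiv_divide_out:
  assumes A: "finite A" "A \<subseteq> {z. G z = 0}" and u: "G u \<noteq> 0"
  shows "deriv (divide_out A) u / divide_out A u
       = deriv G u / G u - (\<Sum>a\<in>A. of_int (zorder G a) / (u - a))"
proof -
  define \<Sigma> where "\<Sigma> = (\<Sum>a\<in>A. of_int (zorder G a) / (u - a))"
  obtain T where T: "open T" "u \<in> T" "G holomorphic_on T"
    using analytic_at_nonzero[OF u] analytic_at by blast
  define S where "S = T - {z. G z = 0}"
  have S: "open S" "u \<in> S" using T closed_zeros_diff[of "{}"] u by (auto simp: S_def)
  have "((\<lambda>w. G w * zero_pole_product A w) has_field_derivative
      deriv G u * zero_pole_product A u + - zero_pole_product A u * \<Sigma> * G u) (at u)"
    unfolding \<Sigma>_def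
    by (rule DERIV_mult[OF holomorphic_derivI[OF T(3,1,2)] has_field_derivative_zero_pole_product[OF A u]])
  also have "deriv G u * zero_pole_product A u + - zero_pole_product A u * \<Sigma> * G u
      = G u * zero_pole_product A u * (deriv G u / G u - \<Sigma>)"
    using u by (simp add: field_simps)
  finally have "(divide_out A has_field_derivative G u * zero_pole_product A u * (deriv G u / G u - \<Sigma>)) (at u)"
    by (rule has_field_derivative_transform_within_open[OF _ S])
       (use divide_out_eq[OF A] in \<open>auto simp: S_def\<close>)
  moreover have "divide_out A u = G u * zero_pole_product A u" by (rule divide_out_eq[OF A u])
  moreover have "divide_out A u \<noteq> 0" using divide_out_nonzero[OF A] u by auto
  ultimately show ?thesis by (simp add: DERIV_imp_deriv \<Sigma>_def)
qed

lemma poles_subset_zeros: "poles_of G \<subseteq> {z. G z = 0}"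
  using zeros_eq_poles_un_zeros by blast

lemma not_pole_rho:
  assumes "G v \<noteq> 0" "G (- v) \<noteq> 0"
  shows "\<not> is_pole (rho_of G) v"
proof -
  have "G analytic_on {v}" "G analytic_on {- v}"
    using assms analytic_at_nonzero by auto
  hence "(\<lambda>w. G (- w)) analytic_on {v}"
    using analytic_on_compose[of uminus "{v}" G] by (simp add: o_def analytic_intros)
  hence "(\<lambda>w. (G w - G (- w)) / (2 * \<i>)) analytic_on {v}"
    using \<open>G analytic_on {v}\<close> by (intro analytic_intros) auto
  thus ?thesis
    unfolding rho_of_def[abs_def] by (rule analytic_at_imp_no_pole)
qed

lemma eventually_nonzero_pm_at_0: "\<forall>\<^sub>F v in at 0. G v \<noteq> 0 \<and> G (- v) \<noteq> 0"
proof -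
  obtain d where "d > 0" "\<And>v. v \<noteq> 0 \<Longrightarrow> dist v 0 < d \<Longrightarrow> G v \<noteq> 0"
    using eventually_nonzero_at[of 0] by (auto simp: eventually_at)
  thus ?thesis
    unfolding eventually_at by (intro exI[of _ d]) (auto simp: dist_norm)
qed

definition disc_quotient :: "real \<Rightarrow> complex \<Rightarrow> complex" where
  "disc_quotient s = divide_out {a. G a = 0 \<and> norm a < s}"

lemma finite_zeros_disc: "finite {a. G a = 0 \<and> norm a < s}"
  by (rule finite_subset[OF _ finite_zeros_cball[of 0 s]]) auto

lemma finite_poles_disc: "finite {p\<in>poles_of G. norm p < s}"
  and finite_zeros_of_disc: "finite {a\<in>zeros_of G. norm a < s}"
  using zeros_eq_poles_un_zeros by (auto intro: finite_subset[OF _ finite_zeros_disc[of s]])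

lemma disc_zeros_subset: "{a. G a = 0 \<and> norm a < s} \<subseteq> {z. G z = 0}"
  by auto

lemma holomorphic_disc_quotient: "disc_quotient s holomorphic_on ball 0 s"
  unfolding disc_quotient_def
  by (rule holomorphic_on_subset[OF holomorphic_divide_out[OF finite_zeros_disc disc_zeros_subset]]) auto

lemma disc_quotient_nonzero: "norm v < s \<Longrightarrow> disc_quotient s v \<noteq> 0"
  unfolding disc_quotient_def by (rule divide_out_nonzero[OF finite_zeros_disc disc_zeros_subset]) auto

lemma disc_quotient_0: "disc_quotient s 0 = G 0"
  using divide_out_eq[OF finite_zeros_disc disc_zeros_subset nonzero_0]
  by (simp add: disc_quotient_def zero_pole_product_def)

lemma norm_disc_quotient_minus_G0_le:
  assumes R: "R > 0" and circle: "\<And>z. norm z = R \<Longrightarrow> G z \<noteq> 0"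
    and bound: "\<And>z. norm z = R \<Longrightarrow> norm (deriv G z / G z) \<le> C / R" and "C \<ge> 0"
    and r: "0 \<le> r" "r < R" and v: "norm v \<le> r"
  shows "norm (disc_quotient R v - G 0) \<le> norm (G 0) * (C / (R - r) * r * exp (C / (R - r) * r))"
proof -
  define A where "A = {a. G a = 0 \<and> norm a < R}"
  define U where "U = - ({z. G z = 0} - A)"
  have A: "finite A" "A \<subseteq> {z. G z = 0}" "A \<subseteq> ball 0 R"
    using finite_zeros_disc by (auto simp: A_def)
  have U: "open U" "disc_quotient R holomorphic_on U" "\<And>w. w \<in> U \<Longrightarrow> disc_quotient R w \<noteq> 0"
    unfolding U_def disc_quotient_def A_def
    using open_Compl[OF closed_zeros_diff] holomorphic_divide_out[OF A(1,2)] divide_out_nonzero[OF A(1,2)]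
    by (auto simp only: A_def)
  have "cball 0 R \<subseteq> U"
    using circle by (force simp: U_def A_def)
  define h where "h w = deriv (disc_quotient R) w / disc_quotient R w" for w
  have "h holomorphic_on U"
    unfolding h_def using U by (intro holomorphic_intros holomorphic_deriv) auto
  have h_circle: "h u = deriv G u / G u + (\<Sum>a\<in>A. - of_int (zorder G a) / (u - a))" if "norm u = R" for u
    using logderiv_divide_out[OF A(1,2) circle[OF that]]
    by (simp add: h_def disc_quotient_def A_def sum_negf)
  have h_le: "norm (h w) \<le> C / (R - norm w)" if "norm w < R" for w
    by (rule circle_bound_modulo_simple_fractions[OF U(1) \<open>cball 0 R \<subseteq> U\<close> R \<open>h holomorphic_on U\<close>
          A(1,3) h_circle bound \<open>C \<ge> 0\<close> that])
  have "norm (disc_quotient R v - disc_quotient R 0)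
      \<le> norm (disc_quotient R 0) * (C / (R - r) * r * exp (C / (R - r) * r))"
  proof (rule norm_diff_le_of_logderiv_bound[OF holomorphic_disc_quotient _ r _ v])
    show "disc_quotient R z \<noteq> 0" if "z \<in> ball 0 R" for z
      using that disc_quotient_nonzero by simp
    fix z :: complex assume "z \<in> cball 0 r"
    hence "norm z \<le> r" by simp
    hence "norm (h z) \<le> C / (R - norm z)" using h_le r by simp
    also have "\<dots> \<le> C / (R - r)"
      using \<open>norm z \<le> r\<close> r \<open>C \<ge> 0\<close> by (intro divide_left_mono) auto
    finally show "norm (deriv (disc_quotient R) z / disc_quotient R z) \<le> C / (R - r)"
      by (simp add: h_def)
  qed
  thus ?thesis by (simp add: disc_quotient_0)
qed

lemma continuous_on_disc_quotient: "\<rho> \<le> s \<Longrightarrow> continuous_on (ball 0 \<rho>) (disc_quotient s)"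
  by (rule holomorphic_on_imp_continuous_on, rule holomorphic_on_subset[OF holomorphic_disc_quotient]) auto

end

locale simple_meromorphic = meromorphic_nonzero_at_0 +
  assumes simple_poles: "\<forall>z\<in>poles_of G. zorder G z = -1"
    and simple_zeros: "\<forall>z\<in>zeros_of G. zorder G z = 1"
begin

lemma zero_pole_product_disc:
  assumes "G w \<noteq> 0"
  shows "zero_pole_product {a. G a = 0 \<and> norm a < s} w * trunc_prod (zeros_of G) s w
       = trunc_prod (poles_of G) s w"
proof -
  define P where "P = {p\<in>poles_of G. norm p < s}"
  define Z where "Z = {a\<in>zeros_of G. norm a < s}"
  have PZ: "{a. G a = 0 \<and> norm a < s} = P \<union> Z" "P \<inter> Z = {}"
    using zeros_eq_poles_un_zeros by (auto simp: P_def Z_def zeros_of_def poles_of_def)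
  have nz: "1 - w / a \<noteq> 0" if "a \<in> Z" for a
    using that assms by (intro factor_nonzero) (auto simp: Z_def zeros_of_def)
  have "zero_pole_product (P \<union> Z) w
      = (\<Prod>a\<in>P. (1 - w / a) powi (- zorder G a)) * (\<Prod>a\<in>Z. (1 - w / a) powi (- zorder G a))"
    unfolding zero_pole_product_def
    by (rule prod.union_disjoint) (use PZ finite_poles_disc finite_zeros_of_disc in \<open>auto simp: P_def Z_def\<close>)
  also have "(\<Prod>a\<in>P. (1 - w / a) powi (- zorder G a)) = trunc_prod (poles_of G) s w"
    unfolding trunc_prod_def P_def using simple_poles by (intro prod.cong) auto
  also have "(\<Prod>a\<in>Z. (1 - w / a) powi (- zorder G a)) = (\<Prod>a\<in>Z. inverse (1 - w / a))"
    using simple_zeros by (intro prod.cong) (auto simp: Z_def power_int_minus)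
  also have "\<dots> = inverse (trunc_prod (zeros_of G) s w)"
    using prod_inversef[of "\<lambda>a. 1 - w / a" Z] by (simp add: trunc_prod_def Z_def o_def)
  finally have "zero_pole_product {a. G a = 0 \<and> norm a < s} w
      = trunc_prod (poles_of G) s w * inverse (trunc_prod (zeros_of G) s w)"
    by (simp only: PZ(1))
  moreover have "trunc_prod (zeros_of G) s w \<noteq> 0"
    using nz finite_zeros_of_disc[of s] unfolding trunc_prod_def Z_def by (metis (no_types, lifting) prod_zero_iff)
  ultimately show ?thesis by (simp add: mult.assoc)
qed

lemma disc_quotient_mult_trunc_prod:
  assumes "G w \<noteq> 0"
  shows "disc_quotient s w * trunc_prod (zeros_of G) s w = G w * trunc_prod (poles_of G) s w"
  using divide_out_eq[OF finite_zeros_disc disc_zeros_subset assms] zero_pole_product_disc[OF assms]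
  by (simp add: disc_quotient_def mult.assoc)

lemma disc_quotient_mult_trunc_prod_extend:
  assumes "\<rho> \<le> s" "norm u < \<rho>"
  shows "disc_quotient s u * trunc_prod (zeros_of G) s u
       = disc_quotient \<rho> u * trunc_prod (zeros_of G) \<rho> u * trunc_prod {p\<in>poles_of G. \<rho> \<le> norm p} s u"
proof (rule continuous_on_eq_off_finite[where S = "ball 0 \<rho>" and F = "{z. G z = 0} \<inter> cball 0 \<rho>"
    and f = "\<lambda>u. disc_quotient s u * trunc_prod (zeros_of G) s u"
    and g = "\<lambda>u. disc_quotient \<rho> u * trunc_prod (zeros_of G) \<rho> u * trunc_prod {p\<in>poles_of G. \<rho> \<le> norm p} s u"])
  show "continuous_on (ball 0 \<rho>) (\<lambda>u. disc_quotient s u * trunc_prod (zeros_of G) s u)"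
    using continuous_on_disc_quotient[OF assms(1)] by (intro continuous_intros continuous_on_trunc_prod)
  show "continuous_on (ball 0 \<rho>) (\<lambda>u. disc_quotient \<rho> u * trunc_prod (zeros_of G) \<rho> u
          * trunc_prod {p\<in>poles_of G. \<rho> \<le> norm p} s u)"
    using continuous_on_disc_quotient[of \<rho> \<rho>] by (intro continuous_intros continuous_on_trunc_prod) auto
  fix y assume "y \<in> ball 0 \<rho> - {z. G z = 0} \<inter> cball 0 \<rho>"
  hence y: "G y \<noteq> 0" by auto
  have "disc_quotient s y * trunc_prod (zeros_of G) s y = G y * trunc_prod (poles_of G) s y"
    by (rule disc_quotient_mult_trunc_prod[OF y])
  also have "trunc_prod (poles_of G) s y
      = trunc_prod (poles_of G) \<rho> y * trunc_prod {p\<in>poles_of G. \<rho> \<le> norm p} s y"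
    by (rule trunc_prod_split[OF assms(1) finite_poles_disc])
  also have "G y * \<dots> = disc_quotient \<rho> y * trunc_prod (zeros_of G) \<rho> y
      * trunc_prod {p\<in>poles_of G. \<rho> \<le> norm p} s y"
    using disc_quotient_mult_trunc_prod[OF y, of \<rho>] by (simp only: mult.assoc)
  finally show "disc_quotient s y * trunc_prod (zeros_of G) s y = disc_quotient \<rho> y
      * trunc_prod (zeros_of G) \<rho> y * trunc_prod {p\<in>poles_of G. \<rho> \<le> norm p} s y" .
qed (use assms finite_zeros_cball in auto)

lemma product_eq_local_form:
  assumes "\<rho> \<le> s" "norm v < \<rho>"
  shows "trunc_prod (poles_of G) s v * trunc_prod (zeros_of G) s (- v)
       = trunc_prod (poles_of G) \<rho> v * (disc_quotient \<rho> (- v) * trunc_prod (zeros_of G) \<rho> (- v))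
         * partial_sq_prod {p\<in>poles_of G. \<rho> \<le> norm p} s v / disc_quotient s (- v)"
proof -
  define T where "T = trunc_prod {p\<in>poles_of G. \<rho> \<le> norm p} s"
  define K where "K = disc_quotient \<rho> (- v) * trunc_prod (zeros_of G) \<rho> (- v)"
  have D: "disc_quotient s (- v) \<noteq> 0" using assms by (intro disc_quotient_nonzero) auto
  have "disc_quotient s (- v) * trunc_prod (zeros_of G) s (- v) = K * T (- v)"
    unfolding K_def T_def using assms by (intro disc_quotient_mult_trunc_prod_extend) auto
  hence zeros: "trunc_prod (zeros_of G) s (- v) = K * T (- v) / disc_quotient s (- v)"
    using D by (simp add: eq_divide_eq mult.commute)
  have poles: "trunc_prod (poles_of G) s v = trunc_prod (poles_of G) \<rho> v * T v"
    unfolding T_def by (rule trunc_prod_split[OF assms(1) finite_poles_disc])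
  have "trunc_prod (poles_of G) s v * trunc_prod (zeros_of G) s (- v)
      = trunc_prod (poles_of G) \<rho> v * T v * (K * T (- v) / disc_quotient s (- v))"
    by (simp only: zeros poles)
  also have "\<dots> = trunc_prod (poles_of G) \<rho> v * K * (T v * T (- v)) / disc_quotient s (- v)"
    by (simp add: mult_ac)
  also have "T v * T (- v) = partial_sq_prod {p\<in>poles_of G. \<rho> \<le> norm p} s v"
    unfolding T_def by (rule trunc_prod_mult_minus)
  finally show ?thesis by (simp only: K_def)
qed

end

locale thermal_setting = simple_meromorphic +
  fixes R :: "nat \<Rightarrow> real" and C \<beta> :: real and \<mu> :: complex
  assumes R_lim: "filterlim R at_top sequentially"
    and circle_nonzero: "\<And>N z. norm z = R N \<Longrightarrow> G z \<noteq> 0"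
    and C_nonneg: "C \<ge> 0"
    and logderiv_bound: "\<And>N z. norm z = R N \<Longrightarrow> norm (deriv G z / G z) \<le> C / R N"
    and summable_poles: "(\<lambda>p. 1 / (norm p)^2) summable_on poles_of G"
    and \<beta>_nonzero: "\<beta> \<noteq> 0"
    and thermal: "\<And>w. \<not> is_pole (rho_of G) w \<Longrightarrow>
         rho_of G w = \<mu> * sinh (of_real \<beta> * w / 2) / sq_infprod (poles_of G) w"
begin

sublocale poles: square_summable_points "poles_of G"
  by unfold_locales (use finite_poles_disc summable_poles in auto)

lemma eventually_R_gt: "\<forall>\<^sub>F N in sequentially. R N > r"
  using R_lim by (simp add: filterlim_at_top_dense)

lemma tendsto_disc_quotient: "(\<lambda>N. disc_quotient (R N) v) \<longlonglongrightarrow> G 0"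
proof -
  define r where "r = norm v"
  define b where "b x = norm (G 0) * (C / (x - r) * r * exp (C / (x - r) * r))" for x
  have "filterlim (\<lambda>x. - r + x) at_top at_top"
    by (rule filterlim_tendsto_add_at_top[OF tendsto_const filterlim_ident])
  hence "filterlim (\<lambda>x. x - r) at_infinity at_top"
    by (intro filterlim_at_top_imp_at_infinity) simp
  hence "((\<lambda>x. C / (x - r)) \<longlongrightarrow> 0) at_top"
    by (rule tendsto_divide_0[OF tendsto_const])
  hence "(b \<longlongrightarrow> norm (G 0) * (0 * r * exp (0 * r))) at_top"
    unfolding b_def by (intro tendsto_mult tendsto_const tendsto_exp)
  hence "(b \<longlongrightarrow> 0) at_top" by simp
  hence b_lim: "(\<lambda>N. b (R N)) \<longlonglongrightarrow> 0"
    by (rule filterlim_compose[OF _ R_lim])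
  have "\<forall>\<^sub>F N in sequentially. norm (disc_quotient (R N) v - G 0) \<le> b (R N)"
    using eventually_R_gt[of r]
  proof eventually_elim
    case (elim N)
    have "R N > 0" using elim norm_ge_zero[of v] unfolding r_def by linarith
    thus ?case unfolding b_def
      by (rule norm_disc_quotient_minus_G0_le[OF _ circle_nonzero logderiv_bound C_nonneg])
         (use elim in \<open>simp_all add: r_def\<close>)
  qed
  hence "(\<lambda>N. disc_quotient (R N) v - G 0) \<longlonglongrightarrow> 0"
    using b_lim by (rule Lim_null_comparison)
  thus ?thesis by (rule LIM_zero_cancel)
qed

lemma rho_mult_sq_infprod:
  assumes "G v \<noteq> 0" "G (- v) \<noteq> 0"
  shows "rho_of G v * sq_infprod (poles_of G) v = \<mu> * sinh (of_real \<beta> * v / 2)"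
proof -
  have "sq_infprod (poles_of G) v \<noteq> 0"
    using assms poles_subset_zeros by (intro poles.sq_infprod_nonzero) auto
  thus ?thesis using thermal[OF not_pole_rho[OF assms]] by simp
qed

text \<open>
  The factor disc_quotient rho u * trunc_prod (zeros_of G) rho u is the continuous extension of
  G u * trunc_prod (poles_of G) rho u across the zeros and poles of G in the disc of radius rho.
\<close>

definition local_limit :: "real \<Rightarrow> complex \<Rightarrow> complex" where
  "local_limit \<rho> v = trunc_prod (poles_of G) \<rho> v * (disc_quotient \<rho> (- v) * trunc_prod (zeros_of G) \<rho> (- v))
     * sq_infprod {p\<in>poles_of G. \<rho> \<le> norm p} v / G 0"

lemma tendsto_product_local_limit:
  assumes "norm v < \<rho>"
  shows "(\<lambda>N. trunc_prod (poles_of G) (R N) v * trunc_prod (zeros_of G) (R N) (- v)) \<longlonglongrightarrow> local_limit \<rho> v"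
proof -
  interpret tail: square_summable_points "{p\<in>poles_of G. \<rho> \<le> norm p}"
    by (rule poles.square_summable_tail)
  have "(\<lambda>N. partial_sq_prod {p\<in>poles_of G. \<rho> \<le> norm p} (R N) v) \<longlonglongrightarrow> sq_infprod {p\<in>poles_of G. \<rho> \<le> norm p} v"
    by (rule filterlim_compose[OF tail.tendsto_sq_infprod R_lim])
  hence "(\<lambda>N. trunc_prod (poles_of G) \<rho> v * (disc_quotient \<rho> (- v) * trunc_prod (zeros_of G) \<rho> (- v))
         * partial_sq_prod {p\<in>poles_of G. \<rho> \<le> norm p} (R N) v / disc_quotient (R N) (- v)) \<longlonglongrightarrow> local_limit \<rho> v"
    unfolding local_limit_def by (intro tendsto_mult tendsto_divide tendsto_const tendsto_disc_quotient nonzero_0)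
  moreover have "\<forall>\<^sub>F N in sequentially. trunc_prod (poles_of G) \<rho> v * (disc_quotient \<rho> (- v) * trunc_prod (zeros_of G) \<rho> (- v))
         * partial_sq_prod {p\<in>poles_of G. \<rho> \<le> norm p} (R N) v / disc_quotient (R N) (- v)
       = trunc_prod (poles_of G) (R N) v * trunc_prod (zeros_of G) (R N) (- v)"
    using eventually_R_gt[of \<rho>] by eventually_elim (rule product_eq_local_form[symmetric], use assms in auto)
  ultimately show ?thesis by (rule Lim_transform_eventually)
qed

lemma continuous_on_local_limit: "continuous_on (ball 0 \<rho>) (local_limit \<rho>)"
proof -
  interpret tail: square_summable_points "{p\<in>poles_of G. \<rho> \<le> norm p}"
    by (rule poles.square_summable_tail)
  have "continuous_on (ball 0 \<rho>) (\<lambda>v. disc_quotient \<rho> (- v))"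
    by (rule continuous_on_compose2[OF continuous_on_disc_quotient[OF order.refl]
          continuous_on_minus[OF continuous_on_id]]) auto
  moreover have "continuous_on (ball 0 \<rho>) (\<lambda>v. trunc_prod (zeros_of G) \<rho> (- v))"
    by (rule continuous_on_compose2[OF continuous_on_trunc_prod continuous_on_minus[OF continuous_on_id]]) auto
  moreover have "continuous_on (ball 0 \<rho>) (sq_infprod {p\<in>poles_of G. \<rho> \<le> norm p})"
    by (intro continuous_at_imp_continuous_on ballI tail.isCont_sq_infprod)
  ultimately show ?thesis
    unfolding local_limit_def using continuous_on_trunc_prod nonzero_0
    by (intro continuous_on_mult continuous_on_divide continuous_on_const) auto
qed

lemma local_limit_antisymmetric:
  assumes "G v \<noteq> 0" "G (- v) \<noteq> 0"
  shows "local_limit \<rho> v - local_limit \<rho> (- v) = 2 * \<i> * (- \<mu> / G 0) * sinh (of_real \<beta> * v / 2)"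
proof -
  define P where "P = trunc_prod (poles_of G) \<rho>"
  define T where "T = sq_infprod {p\<in>poles_of G. \<rho> \<le> norm p} v"
  have K: "disc_quotient \<rho> u * trunc_prod (zeros_of G) \<rho> u = G u * P u" if "G u \<noteq> 0" for u
    unfolding P_def by (rule disc_quotient_mult_trunc_prod[OF that])
  have "local_limit \<rho> v - local_limit \<rho> (- v) = (P v * P (- v) * T) * (G (- v) - G v) / G 0"
    unfolding local_limit_def sq_infprod_minus P_def[symmetric] T_def[symmetric]
    using K[OF assms(2)] K[of v] assms(1) by (simp add: algebra_simps diff_divide_distrib)
  also have "P v * P (- v) * T = sq_infprod (poles_of G) v"
    unfolding P_def T_def trunc_prod_mult_minus by (rule poles.sq_infprod_split[symmetric])
  also have "G (- v) - G v = - (2 * \<i>) * rho_of G v"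
    by (simp add: rho_of_def)
  also have "sq_infprod (poles_of G) v * (- (2 * \<i>) * rho_of G v) / G 0
      = - (2 * \<i>) * (rho_of G v * sq_infprod (poles_of G) v) / G 0"
    by (simp only: mult_ac)
  also have "\<dots> = 2 * \<i> * (- \<mu> / G 0) * sinh (of_real \<beta> * v / 2)"
    by (simp add: rho_mult_sq_infprod[OF assms])
  finally show ?thesis .
qed

lemma lim_product_antisymmetric:
  "lim (\<lambda>N. trunc_prod (poles_of G) (R N) w * trunc_prod (zeros_of G) (R N) (- w))
     - lim (\<lambda>N. trunc_prod (poles_of G) (R N) (- w) * trunc_prod (zeros_of G) (R N) w)
   = 2 * \<i> * (- \<mu> / G 0) * sinh (of_real \<beta> * w / 2)"
proof -
  define \<rho> where "\<rho> = norm w + 1"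
  have "norm w < \<rho>" by (simp add: \<rho>_def)
  have lims: "lim (\<lambda>N. trunc_prod (poles_of G) (R N) w * trunc_prod (zeros_of G) (R N) (- w)) = local_limit \<rho> w"
    "lim (\<lambda>N. trunc_prod (poles_of G) (R N) (- w) * trunc_prod (zeros_of G) (R N) w) = local_limit \<rho> (- w)"
    using limI[OF tendsto_product_local_limit[of w \<rho>]] limI[OF tendsto_product_local_limit[of "- w" \<rho>]]
      \<open>norm w < \<rho>\<close> by simp_all
  define Z where "Z = {z. G z = 0} \<inter> cball 0 \<rho>"
  have "local_limit \<rho> w - local_limit \<rho> (- w) = 2 * \<i> * (- \<mu> / G 0) * sinh (of_real \<beta> * w / 2)"
  proof (rule continuous_on_eq_off_finite[where S = "ball 0 \<rho>" and F = "Z \<union> uminus ` Z"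
      and f = "\<lambda>v. local_limit \<rho> v - local_limit \<rho> (- v)"
      and g = "\<lambda>v. 2 * \<i> * (- \<mu> / G 0) * sinh (of_real \<beta> * v / 2)"])
    have "continuous_on (ball 0 \<rho>) (\<lambda>v. local_limit \<rho> (- v))"
      by (rule continuous_on_compose2[OF continuous_on_local_limit continuous_on_minus[OF continuous_on_id]]) auto
    thus "continuous_on (ball 0 \<rho>) (\<lambda>v. local_limit \<rho> v - local_limit \<rho> (- v))"
      by (intro continuous_intros continuous_on_local_limit)
    show "continuous_on (ball 0 \<rho>) (\<lambda>v. 2 * \<i> * (- \<mu> / G 0) * sinh (of_real \<beta> * v / 2))"
      by (intro continuous_intros) auto
    show "finite (Z \<union> uminus ` Z)" using finite_zeros_cball by (simp add: Z_def)
    fix v assume v: "v \<in> ball 0 \<rho> - (Z \<union> uminus ` Z)"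
    hence "v \<notin> Z" "- v \<notin> Z" using image_eqI[of v uminus "- v" Z] by auto
    hence "G v \<noteq> 0" "G (- v) \<noteq> 0" using v by (auto simp: Z_def)
    thus "local_limit \<rho> v - local_limit \<rho> (- v) = 2 * \<i> * (- \<mu> / G 0) * sinh (of_real \<beta> * v / 2)"
      by (rule local_limit_antisymmetric)
  qed (use \<open>norm w < \<rho>\<close> in auto)
  thus ?thesis by (simp only: lims)
qed

lemma convergent_product:
  "convergent (\<lambda>N. trunc_prod (poles_of G) (R N) w * trunc_prod (zeros_of G) (R N) (- w))"
  using tendsto_product_local_limit[of w "norm w + 1"] by (auto simp: convergent_def)

lemma lambda_eq: "- \<mu> / G 0 = 2 * \<i> * deriv G 0 / (of_real \<beta> * G 0)"
proof -
  define D where "D = (deriv G 0 + deriv G 0) / (2 * \<i>)"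
  have dG: "(G has_field_derivative deriv G 0) (at 0)"
    using analytic_at_nonzero[OF nonzero_0] by (auto simp: analytic_at intro: holomorphic_derivI)
  have "(G has_field_derivative deriv G 0) (at (- 0))" using dG by simp
  hence "((\<lambda>v. G (- v)) has_field_derivative deriv G 0 * (- 1)) (at 0)"
    by (rule DERIV_chain2[OF _ DERIV_minus[OF DERIV_ident]])
  hence "(rho_of G has_field_derivative D) (at 0)"
    unfolding rho_of_def[abs_def] D_def using dG by (auto intro!: derivative_eq_intros)
  hence "((\<lambda>v. rho_of G v / v) \<longlongrightarrow> D) (at 0)"
    by (simp add: has_field_derivative_iff rho_of_def)
  moreover have "(sq_infprod (poles_of G) \<longlongrightarrow> 1) (at 0)"
    using poles.isCont_sq_infprod[of 0] by (simp add: isCont_def poles.sq_infprod_0)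
  ultimately have lhs: "((\<lambda>v. rho_of G v / v * sq_infprod (poles_of G) v) \<longlongrightarrow> D) (at 0)"
    using tendsto_mult by fastforce
  have "((\<lambda>v. sinh (of_real \<beta> * v / 2)) has_field_derivative of_real \<beta> / 2) (at 0)"
    by (auto intro!: derivative_eq_intros)
  hence "((\<lambda>v. \<mu> * (sinh (of_real \<beta> * v / 2) / v)) \<longlongrightarrow> \<mu> * (of_real \<beta> / 2)) (at 0)"
    by (intro tendsto_mult tendsto_const) (simp add: has_field_derivative_iff)
  moreover have "\<forall>\<^sub>F v in at 0. \<mu> * (sinh (of_real \<beta> * v / 2) / v) = rho_of G v / v * sq_infprod (poles_of G) v"
    using eventually_nonzero_pm_at_0 by eventually_elim (simp add: rho_mult_sq_infprod[symmetric])
  ultimately have "((\<lambda>v. rho_of G v / v * sq_infprod (poles_of G) v) \<longlongrightarrow> \<mu> * (of_real \<beta> / 2)) (at 0)"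
    by (rule Lim_transform_eventually)
  with lhs have "D = \<mu> * (of_real \<beta> / 2)"
    by (rule tendsto_unique[OF at_neq_bot])
  hence "- (\<i> * (deriv G 0 * 2)) = \<mu> * of_real \<beta>"
    by (simp add: D_def field_simps)
  hence "- \<mu> * of_real \<beta> = 2 * \<i> * deriv G 0"
    by (metis minus_minus mult.commute mult.left_commute mult_minus_left)
  moreover have "- \<mu> / G 0 = - \<mu> * of_real \<beta> / (of_real \<beta> * G 0)"
    using \<beta>_nonzero by simp
  ultimately show ?thesis by simp
qed

end

theorem mainTheorem3:
  fixes G :: "complex \<Rightarrow> complex"
    and R :: "nat \<Rightarrow> real" and C :: real
    and \<beta> :: real and \<mu> :: complex
  assumes mero: "G nicely_meromorphic_on UNIV"
    and holo_uhp: "G analytic_on {z. Im z \<ge> 0}"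
    and poles_lower: "\<forall>z\<in>poles_of G. Im z < 0"
    and simple_poles: "\<forall>z\<in>poles_of G. zorder G z = -1"
    and simple_zeros: "\<forall>z\<in>zeros_of G. zorder G z = 1"
    and G0: "\<not> is_pole G 0" "G 0 \<noteq> 0"
    and R_mono: "strict_mono R" and R_pos: "\<forall>N. R N > 0"
    and R_lim: "filterlim R at_top sequentially"
    and R_circ: "\<forall>N z. norm z = R N \<longrightarrow> z \<notin> poles_of G \<and> z \<notin> zeros_of G"
    and C_pos: "C > 0"
    and logderiv_bound: "\<forall>N z. norm z = R N \<longrightarrow> norm (deriv G z / G z) \<le> C / R N"
    and summ: "(\<lambda>p. 1 / (norm p)^2) summable_on poles_of G"
    and \<beta>_pos: "\<beta> > 0" and \<mu>_nz: "\<mu> \<noteq> 0"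
    and thermal: "\<forall>w. \<not> is_pole (rho_of G) w \<longrightarrow>
         rho_of G w = \<mu> * sinh (of_real \<beta> * w / 2) / sq_infprod (poles_of G) w"
  shows "(\<forall>w. convergent (\<lambda>N. trunc_prod (poles_of G) (R N) w * trunc_prod (zeros_of G) (R N) (- w)))
       \<and> (\<forall>w. lim (\<lambda>N. trunc_prod (poles_of G) (R N) w * trunc_prod (zeros_of G) (R N) (- w))
              - lim (\<lambda>N. trunc_prod (poles_of G) (R N) (- w) * trunc_prod (zeros_of G) (R N) w)
              = 2 * \<i> * (- \<mu> / G 0) * sinh (of_real \<beta> * w / 2))
       \<and> - \<mu> / G 0 = 2 * \<i> * deriv G 0 / (of_real \<beta> * G 0)"
proof -
  interpret meromorphic_nonzero_at_0 G
    using mero G0(2) by unfold_locales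
  have circle_nonzero: "G z \<noteq> 0" if "norm z = R N" for N z
    using R_circ that zeros_eq_poles_un_zeros by blast
  interpret thermal_setting G R C \<beta> \<mu>
    by unfold_locales (use simple_poles simple_zeros R_lim circle_nonzero C_pos logderiv_bound
        summ \<beta>_pos thermal in auto)
  show ?thesis using convergent_product lim_product_antisymmetric lambda_eq by blast
qed

end
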